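(* Let $(m_{1},\ldots,m_{\mu})$ be a $\mu$-tuple of even integers. For any unoriented $\mu$-component welded link $L$, the welded link $L(m_{1},\ldots,m_{\mu})$ can be deformed into the $\mu$-component trivial link by unoriented $V^{2}$-moves (together with welded Reidemeister moves).
   Context: An unoriented virtual link diagram is the image of an immersion of finitely many circles in the plane with transverse double points, each a classical crossing (with over/under information) or a virtual crossing. Welded Reidemeister moves are R1–R3, the virtual moves VR1–VR4, and the OC move (a strand passing over two strands at classical crossings may slide across a virtual crossing of those two strands); an unoriented welded link is an equivalence class of unoriented diagrams under these moves. The trivial $\mu$-component link is represented by $\mu$ disjoint circles without crossings. Multiplexing: let $D=\bigcup_{i=1}^{\mu}D_i$ be an unoriented $\mu$-component diagram and $(m_1,\dots,m_\mu)\in\mathbb{Z}^\mu$. View a classical crossing whose over-strand belongs to $D_j$ locally as a $2$-braid generator $\sigma$. Its multiplexing associated with $m_j$ replaces $\sigma$ by the word $\sigma\tau\sigma\tau\cdots\tau\sigma$ with $m_j$ letters $\sigma$ and $m_j-1$ virtual crossings $\tau$ if $m_j>0$; by a single virtual crossing $\tau$ if $m_j=0$; and by $\sigma^{-1}\tau\sigma^{-1}\cdots\tau\sigma^{-1}$ with $|m_j|$ letters $\sigma^{-1}$ (the crossing with over/under switched) if $m_j<0$. $D(m_1,\dots,m_\mu)$ is obtained by doing this at every classical crossing of $D$; its welded class depends only on the welded class $L$ of $D$ and is denoted $L(m_1,\dots,m_\mu)$. The unoriented $V^{2}$-move: inside a disk with two arcs $a,b$, replace parallel arcs without crossings by the tangle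 $(\sigma\tau)^{2}$, where $\sigma$ is a classical crossing with $b$ over $a$ and $\tau$ a virtual crossing, or the reverse; orientations disregarded. *)

theory Defs
  imports Main "HOL-Library.Nat_Bijection"
begin

text \<open>
  Virtual link diagrams modulo planar isotopy and the virtual moves VR1--VR4 are
  encoded by Gauss diagrams (Goussarov--Polyak--Viro).  A Gauss diagram with mu
  components is a list of mu lists (one cyclic word per oriented component).
  Each entry is an endpoint (c, ov, s) of the chord labelled c: ov = True means
  the over-crossing passage (tail of the arrow), ov = False the under-crossing
  passage (head); s is the sign of the classical crossing.
\<close>

type_synonym endpt = "nat \<times> bool \<times> bool"
type_synonym gdiag = "endpt list list"

definition occ :: "gdiag \<Rightarrow> nat \<Rightarrow> endpt list" where
  "occ D c = filter (\<lambda>e. fst e = c) (concat D)"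

definition gauss_wf :: "gdiag \<Rightarrow> bool" where
  "gauss_wf D \<longleftrightarrow> (\<forall>c. occ D c = [] \<or>
      (length (occ D c) = 2 \<and> (\<exists>s. (c, True, s) \<in> set (occ D c) \<and> (c, False, s) \<in> set (occ D c))))"

definition trivial_diag :: "nat \<Rightarrow> gdiag" where
  "trivial_diag mu = replicate mu []"

datatype titem = Pt endpt | Hole nat

definition fill :: "(nat \<Rightarrow> endpt list) \<Rightarrow> titem list list \<Rightarrow> gdiag" where
  "fill F C = map (\<lambda>w. concat (map (\<lambda>x. case x of Pt e \<Rightarrow> [e] | Hole n \<Rightarrow> F n) w)) C"

definition template_ok :: "titem list list \<Rightarrow> nat \<Rightarrow> bool" where
  "template_ok C n \<longleftrightarrow>
     (\<forall>i<n. length (filter (\<lambda>x. x = Hole i) (concat C)) = 1) \<and>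
     (\<forall>i. Hole i \<in> set (concat C) \<longrightarrow> i < n)"

definition tlabels :: "titem list list \<Rightarrow> nat set" where
  "tlabels C = {c. \<exists>ov s. Pt (c, ov, s) \<in> set (concat C)}"

definition ord2 :: "bool \<Rightarrow> 'a \<Rightarrow> 'a \<Rightarrow> 'a list" where
  "ord2 b x y = (if b then [x, y] else [y, x])"

text \<open>R3: arcs T (hole 0), M (hole 1), B (hole 2), chords c1: T over M,
  c2: T over B, c3: M over B.  The move reverses the order of the two endpoints
  on each arc; the side condition singles out exactly the sign/order patterns
  realised by three lines in the plane.\<close>

definition r3_frag :: "nat \<Rightarrow> nat \<Rightarrow> nat \<Rightarrow> bool \<Rightarrow> bool \<Rightarrow> bool \<Rightarrow> bool \<Rightarrow> bool \<Rightarrow> bool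
    \<Rightarrow> nat \<Rightarrow> endpt list" where
  "r3_frag c1 c2 c3 s1 s2 s3 oT oM oB i =
     (if i = 0 then ord2 oT (c1, True, s1) (c2, True, s2)
      else if i = 1 then ord2 oM (c1, False, s1) (c3, True, s3)
      else ord2 oB (c2, False, s2) (c3, False, s3))"

inductive welded_step :: "gdiag \<Rightarrow> gdiag \<Rightarrow> bool" where
  rotate: "k < length D \<Longrightarrow> welded_step D (D[k := rotate1 (D ! k)])"
| rename: "inj f \<Longrightarrow> welded_step D (map (map (\<lambda>(c, ov, s). (f c, ov, s))) D)"
| R1: "template_ok C 1 \<Longrightarrow> c \<notin> tlabels C \<Longrightarrow>
     welded_step (fill (\<lambda>_. []) C) (fill (\<lambda>_. [(c, ov, s), (c, \<not> ov, s)]) C)"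
| R2: "template_ok C 2 \<Longrightarrow> c \<notin> tlabels C \<Longrightarrow> d \<notin> tlabels C \<Longrightarrow> c \<noteq> d \<Longrightarrow>
     welded_step (fill (\<lambda>_. []) C)
       (fill (\<lambda>i. if i = 0 then [(c, False, s), (d, False, \<not> s)]
                  else ord2 b (c, True, s) (d, True, \<not> s)) C)"
| R3: "template_ok C 3 \<Longrightarrow> c1 \<notin> tlabels C \<Longrightarrow> c2 \<notin> tlabels C \<Longrightarrow> c3 \<notin> tlabels C \<Longrightarrow>
     c1 \<noteq> c2 \<Longrightarrow> c1 \<noteq> c3 \<Longrightarrow> c2 \<noteq> c3 \<Longrightarrow>
     ((s1 \<noteq> s2) \<longleftrightarrow> (oM \<noteq> oB)) \<Longrightarrow> ((s2 \<noteq> s3) \<longleftrightarrow> (oT \<noteq> oM)) \<Longrightarrow>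
     welded_step (fill (r3_frag c1 c2 c3 s1 s2 s3 oT oM oB) C)
                 (fill (\<lambda>i. rev (r3_frag c1 c2 c3 s1 s2 s3 oT oM oB i)) C)"
| OC: "template_ok C 1 \<Longrightarrow>
     welded_step (fill (\<lambda>_. [(a, True, s), (b, True, t)]) C)
                 (fill (\<lambda>_. [(b, True, t), (a, True, s)]) C)"

definition reverse_comp :: "gdiag \<Rightarrow> nat \<Rightarrow> gdiag" where
  "reverse_comp D k =
     (let S = {c. length (filter (\<lambda>e. fst e = c) (D ! k)) = 1};
          D' = map (map (\<lambda>(c, ov, s). (c, ov, if c \<in> S then \<not> s else s))) D
      in D'[k := rev (D' ! k)])"

inductive unoriented_welded_step :: "gdiag \<Rightarrow> gdiag \<Rightarrow> bool" where
  welded: "welded_step D D' \<Longrightarrow> unoriented_welded_step D D'"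
| reverse: "k < length D \<Longrightarrow> unoriented_welded_step D (reverse_comp D k)"

text \<open>Unoriented V^2-move: two chords with the same sign, both from arc b (hole 1)
  to arc a (hole 0), heads adjacent on a and tails adjacent on b.\<close>
inductive v2_step :: "gdiag \<Rightarrow> gdiag \<Rightarrow> bool" where
  V2: "template_ok C 2 \<Longrightarrow> c \<notin> tlabels C \<Longrightarrow> d \<notin> tlabels C \<Longrightarrow> c \<noteq> d \<Longrightarrow>
     v2_step (fill (\<lambda>_. []) C)
       (fill (\<lambda>i. if i = 0 then [(c, False, s), (d, False, s)]
                  else ord2 b (c, True, s) (d, True, s)) C)"

definition tailcomp :: "gdiag \<Rightarrow> nat \<Rightarrow> nat" where
  "tailcomp D c = (LEAST j. j < length D \<and> (\<exists>s. (c, True, s) \<in> set (D ! j)))"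

definition mux_endpt :: "int \<Rightarrow> endpt \<Rightarrow> endpt list" where
  "mux_endpt k e = (case e of (c, ov, s) \<Rightarrow>
     (if k \<ge> 0 then map (\<lambda>i. (prod_encode (c, i), ov, s)) [0..<nat k]
      else map (\<lambda>i. (prod_encode (c, i), \<not> ov, \<not> s)) [0..<nat (- k)]))"

definition multiplex :: "(nat \<Rightarrow> int) \<Rightarrow> gdiag \<Rightarrow> gdiag" where
  "multiplex m D = map (\<lambda>w. concat (map (\<lambda>e. mux_endpt (m (tailcomp D (fst e))) e) w)) D"

end

theory Submission
  imports Defs
begin

text \<open>Multiplexing a chord with multiplicity k replaces it by |k| parallel chords of equal
  sign whose heads, and whose tails, are consecutive in the same order.  The last two of them
  therefore form the tangle of a V^2-move, so a V^2-move changes the multiplicity by 2 towards 0.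
  For even multiplicities every chord is removed in this way, which leaves the trivial diagram.\<close>

definition chords :: "gdiag \<Rightarrow> nat set" where
  "chords D = fst ` set (concat D)"

definition multiplex_chords :: "(nat \<Rightarrow> int) \<Rightarrow> gdiag \<Rightarrow> gdiag" where
  "multiplex_chords k D = map (\<lambda>w. concat (map (\<lambda>e. mux_endpt (k (fst e)) e) w)) D"

definition expand_template :: "(endpt \<Rightarrow> titem list) \<Rightarrow> gdiag \<Rightarrow> titem list list" where
  "expand_template g D = map (\<lambda>w. concat (map g w)) D"

lemma concat_map_concat_map:
  "concat (map f (concat (map g xs))) = concat (map (\<lambda>x. concat (map f (g x))) xs)"
  by (induction xs) auto

lemma fill_expand_template:
  "fill F (expand_template g D) =
     map (\<lambda>w. concat (map (\<lambda>e. concat (map (case_titem (\<lambda>e. [e]) F) (g e))) w)) D"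
  by (simp add: fill_def expand_template_def concat_map_concat_map)

lemma case_titem_comp_Pt [simp]: "case_titem f g \<circ> Pt = f"
  by (simp add: fun_eq_iff)

lemma concat_expand_template: "concat (expand_template g D) = concat (map g (concat D))"
  by (induction D) (simp_all add: expand_template_def)

lemma gauss_wf_occ_cases:
  assumes "gauss_wf D" and "c \<in> chords D"
  obtains s where "occ D c = [(c, True, s), (c, False, s)] \<or> occ D c = [(c, False, s), (c, True, s)]"
proof -
  have "occ D c \<noteq> []"
    using assms(2) by (auto simp: chords_def occ_def filter_empty_conv)
  with assms(1) obtain s where len: "length (occ D c) = 2"
    and mem: "(c, True, s) \<in> set (occ D c)" "(c, False, s) \<in> set (occ D c)"
    unfolding gauss_wf_def by (metis (no_types))
  from len obtain x y where "occ D c = [x, y]"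
    by (auto simp: numeral_2_eq_2 length_Suc_conv)
  with mem show ?thesis
    using that by auto
qed

lemma mux_endpt_peel_two:
  assumes "2 \<le> \<bar>k\<bar>"
  shows "mux_endpt k (c, ov, s) = mux_endpt (k - 2 * sgn k) (c, ov, s) @
    [(prod_encode (c, nat \<bar>k\<bar> - 2), ov = (0 < k), s = (0 < k)),
     (prod_encode (c, nat \<bar>k\<bar> - 1), ov = (0 < k), s = (0 < k))]"
proof -
  obtain n where n: "nat \<bar>k\<bar> = Suc (Suc n)"
    using assms by (intro that[of "nat \<bar>k\<bar> - 2"]) auto
  show ?thesis
  proof (cases "0 < k")
    case True
    with n have "nat k = Suc (Suc n)" "nat (k - 2) = n" by auto
    with True show ?thesis by (simp add: mux_endpt_def)
  next
    case False
    with n have "nat (- k) = Suc (Suc n)" "nat (- (k + 2)) = n" "0 \<le> k + 2 \<longleftrightarrow> n = 0" by auto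
    with False show ?thesis by (cases "n = 0") (simp_all add: mux_endpt_def)
  qed
qed

lemma nat_abs_minus_two_sgn: "2 \<le> \<bar>k\<bar> \<Longrightarrow> nat \<bar>k - 2 * sgn k\<bar> = nat \<bar>k\<bar> - 2"
  for k :: int
  by (cases "0 < k") auto

lemma fst_mux_endpt:
  "x \<in> set (mux_endpt k e) \<Longrightarrow> \<exists>i < nat \<bar>k\<bar>. fst x = prod_encode (fst e, i)"
  by (cases e) (auto simp: mux_endpt_def split: if_splits)

text \<open>The V^2-move puts the tails of the new chords into hole 1; choosing p = (0 < k c)
  achieves this, since a negative multiplicity swaps heads and tails.\<close>
definition hole_template :: "(nat \<Rightarrow> int) \<Rightarrow> nat \<Rightarrow> bool \<Rightarrow> gdiag \<Rightarrow> titem list list" where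
  "hole_template k c p D = expand_template
     (\<lambda>e. map Pt (mux_endpt (k (fst e)) e) @
           (if fst e = c then [Hole (of_bool (fst (snd e) = p))] else [])) D"

lemma fill_hole_template:
  "fill G (hole_template k c p D) =
     map (\<lambda>w. concat (map (\<lambda>e. mux_endpt (k (fst e)) e @
       (if fst e = c then G (of_bool (fst (snd e) = p)) else [])) w)) D"
  by (simp add: hole_template_def fill_expand_template if_distrib[of "map _"] if_distrib[of concat]
      cong: if_cong)

lemma template_ok_hole_template:
  assumes "gauss_wf D" and "c \<in> chords D"
  shows "template_ok (hole_template k c p D) 2"
proof -
  obtain s where occ_c:
    "occ D c = [(c, True, s), (c, False, s)] \<or> occ D c = [(c, False, s), (c, True, s)]"
    using gauss_wf_occ_cases[OF assms] .
  let ?h = "\<lambda>e :: endpt. of_bool (fst (snd e) = p) :: nat"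
  have "length (filter (\<lambda>x. x = Hole i) (concat (map (\<lambda>e. map Pt (mux_endpt (k (fst e)) e) @
      (if fst e = c then [Hole (?h e)] else [])) xs))) =
      length (filter (\<lambda>e. fst e = c \<and> ?h e = i) xs)"
    for i xs
    by (induction xs) (auto simp: filter_empty_conv)
  then have count_holes: "length (filter (\<lambda>x. x = Hole i) (concat (hole_template k c p D))) =
      length (filter (\<lambda>e. ?h e = i) (occ D c))"
    for i
    unfolding hole_template_def concat_expand_template occ_def filter_filter by simp
  have "Hole i \<in> set (concat (hole_template k c p D)) \<Longrightarrow> i < 2" for i
    by (auto simp: hole_template_def concat_expand_template split: if_splits)
  then show ?thesis
    using occ_c by (auto simp: template_ok_def count_holes less_2_cases_iff)
qed

lemma tlabels_hole_template:
  "x \<in> tlabels (hole_template k c p D) \<Longrightarrow> \<exists>c' j. x = prod_encode (c', j) \<and> j < nat \<bar>k c'\<bar>"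
  by (fastforce simp: tlabels_def hole_template_def concat_expand_template split: if_splits
      dest: fst_mux_endpt)

lemma v2_step_multiplex_chords_peel_two:
  assumes wf: "gauss_wf D" and c: "c \<in> chords D" and two: "2 \<le> \<bar>k c\<bar>"
  shows "v2_step (multiplex_chords (k(c := k c - 2 * sgn (k c))) D) (multiplex_chords k D)"
proof -
  obtain s where occ_c:
    "occ D c = [(c, True, s), (c, False, s)] \<or> occ D c = [(c, False, s), (c, True, s)]"
    using gauss_wf_occ_cases[OF wf c] .
  define k' where "k' = k(c := k c - 2 * sgn (k c))"
  define a where "a = prod_encode (c, nat \<bar>k c\<bar> - 2)"
  define b where "b = prod_encode (c, nat \<bar>k c\<bar> - 1)"
  define t where "t = (s = (0 < k c))"
  define F where "F i = (if i = 0 then [(a, False, t), (b, False, t)]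
                          else ord2 True (a, True, t) (b, True, t))" for i :: nat
  define C where "C = hole_template k' c (0 < k c) D"
  have "fill (\<lambda>_. []) C = multiplex_chords k' D"
    by (simp add: C_def fill_hole_template multiplex_chords_def)
  moreover have "fill F C = multiplex_chords k D"
  proof -
    have peel: "mux_endpt (k' (fst e)) e @
        (if fst e = c then F (of_bool (fst (snd e) = (0 < k c))) else []) = mux_endpt (k (fst e)) e"
      if "e \<in> set (concat D)" for e
    proof (cases "fst e = c")
      case True
      with that have "e \<in> set (occ D c)"
        by (simp add: occ_def)
      with occ_c obtain ov where "e = (c, ov, s)"
        by (metis empty_iff empty_set set_ConsD)
      then show ?thesis
        by (cases ov)
          (simp_all add: mux_endpt_peel_two[OF two] k'_def F_def a_def b_def t_def ord2_def)
    qed (simp add: k'_def)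
    then show ?thesis
      unfolding C_def fill_hole_template multiplex_chords_def
      by (auto intro!: map_cong arg_cong[where f = concat] peel)
  qed
  moreover have "template_ok C 2"
    unfolding C_def using wf c by (rule template_ok_hole_template)
  moreover have "a \<notin> tlabels C" "b \<notin> tlabels C"
  proof -
    have "nat \<bar>k' c\<bar> = nat \<bar>k c\<bar> - 2"
      using two by (simp add: k'_def nat_abs_minus_two_sgn)
    then show "a \<notin> tlabels C" "b \<notin> tlabels C"
      by (force simp: a_def b_def C_def dest: tlabels_hole_template)+
  qed
  moreover have "a \<noteq> b"
    using two by (simp add: a_def b_def)
  ultimately show ?thesis
    using v2_step.V2[of C a b t True] unfolding F_def k'_def by simp
qed

lemma equivclp_mono: "r \<le> s \<Longrightarrow> equivclp r \<le> equivclp s"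
  unfolding equivclp_def by (intro rtranclp_mono) (auto simp: symclp_pointfree)

lemma multiplex_chords_zero:
  "\<forall>c \<in> chords D. k c = 0 \<Longrightarrow> multiplex_chords k D = trivial_diag (length D)"
  by (induction D) (auto simp: multiplex_chords_def trivial_diag_def chords_def mux_endpt_def)

lemma multiplex_chords_even_equiv_trivial:
  assumes wf: "gauss_wf D"
  shows "\<forall>c \<in> chords D. even (k c) \<Longrightarrow>
    equivclp v2_step (multiplex_chords k D) (trivial_diag (length D))"
proof (induction "\<Sum>c \<in> chords D. nat \<bar>k c\<bar>" arbitrary: k rule: less_induct)
  case less
  show ?case
  proof (cases "\<forall>c \<in> chords D. k c = 0")
    case True
    then show ?thesis
      by (simp add: multiplex_chords_zero)
  next
    case False
    then obtain c where c: "c \<in> chords D" and "k c \<noteq> 0"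
      by blast
    with less.prems have two: "2 \<le> \<bar>k c\<bar>"
      by (auto elim!: evenE simp: abs_mult)
    define k' where "k' = k(c := k c - 2 * sgn (k c))"
    have "finite (chords D)"
      by (simp add: chords_def)
    then have "(\<Sum>c \<in> chords D. nat \<bar>k' c\<bar>) < (\<Sum>c \<in> chords D. nat \<bar>k c\<bar>)"
      using two c by (intro sum_strict_mono_ex1 bexI[of _ c]) (auto simp: k'_def abs_if sgn_if)
    moreover have "\<forall>c \<in> chords D. even (k' c)"
      using less.prems by (simp add: k'_def)
    ultimately have "equivclp v2_step (multiplex_chords k' D) (trivial_diag (length D))"
      by (rule less.hyps)
    moreover have "v2_step (multiplex_chords k' D) (multiplex_chords k D)"
      unfolding k'_def using wf c two by (rule v2_step_multiplex_chords_peel_two)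
    ultimately show ?thesis
      by (meson converse_r_into_equivclp equivclp_trans)
  qed
qed

lemma tailcomp_less_length:
  assumes "gauss_wf D" and "c \<in> chords D"
  shows "tailcomp D c < length D"
proof -
  obtain s where "(c, True, s) \<in> set (occ D c)"
    by (rule gauss_wf_occ_cases[OF assms]) auto
  then have "\<exists>j. j < length D \<and> (\<exists>s. (c, True, s) \<in> set (D ! j))"
    by (force simp: occ_def in_set_conv_nth)
  then show ?thesis
    unfolding tailcomp_def by (rule LeastI2_ex) auto
qed

theorem proposition6p3:
  fixes mu :: nat and m :: "nat \<Rightarrow> int" and D :: gdiag
  assumes "\<forall>i<mu. even (m i)"
    and "gauss_wf D"
    and "length D = mu"
  shows "equivclp (sup unoriented_welded_step v2_step) (multiplex m D) (trivial_diag mu)"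
proof -
  have "multiplex m D = multiplex_chords (\<lambda>c. m (tailcomp D c)) D"
    by (simp add: multiplex_def multiplex_chords_def)
  moreover have "\<forall>c \<in> chords D. even (m (tailcomp D c))"
    using assms tailcomp_less_length by blast
  ultimately have "equivclp v2_step (multiplex m D) (trivial_diag mu)"
    using multiplex_chords_even_equiv_trivial[OF assms(2)] assms(3) by simp
  then show ?thesis
    using equivclp_mono[of v2_step "sup unoriented_welded_step v2_step"] by auto
qed

end
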